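(* Let $U\subseteq\mathbb{R}^m$ be a connected open set with coordinates $(f_1,\dots,f_m)$, and let $h_1,\dots,h_m:U\to(0,\infty)$ be differentiable functions satisfying $$\frac{\partial h_\alpha}{\partial f_\beta}=\delta_{\alpha\beta}h_\beta-h_\alpha h_\beta,\qquad \alpha,\beta\in\{1,\dots,m\}.$$ Then there exist real constants $\gamma,\sigma_1,\dots,\sigma_m$ such that, with $$\tilde F:=\log\Big(\gamma+\sum_{\alpha=1}^m e^{f_\alpha-\sigma_\alpha}\Big),$$ one has $h_\alpha=\partial\tilde F/\partial f_\alpha$ for all $\alpha=1,\dots,m$ on $U$.
   Context: $\delta_{\alpha\beta}$ denotes the Kronecker delta. The functions $h_\alpha$ play the role of generalized Gibbs weights depending on the variables $f_1,\dots,f_m$. *)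

theory Defs
  imports "HOL-Analysis.Analysis"
begin

definition has_partial_derivative ::
  "(real^'m \<Rightarrow> real) \<Rightarrow> 'm \<Rightarrow> real \<Rightarrow> real^'m \<Rightarrow> bool" where
  "has_partial_derivative f i D x \<longleftrightarrow>
     ((\<lambda>t. f (x + t *\<^sub>R axis i 1)) has_real_derivative D) (at 0)"

end

theory Submission
  imports Defs
begin

text \<open>The defining equations say that every \<open>ln h\<alpha> - f\<alpha>\<close> has the same gradient \<open>-h\<close>.
  On the connected set \<open>U\<close> the differences of these functions are therefore constant, i.e.
  \<open>h\<alpha> = exp (f\<alpha> - \<sigma>\<alpha>) / Z\<close> for constants \<open>\<sigma>\<alpha>\<close>, where \<open>Z = exp (fa) / ha\<close> for a fixed index \<open>a\<close>.
  The logarithmic gradient of \<open>Z\<close> is \<open>h\<close>, while the gradient of \<open>1 - \<Sum>\<beta> h\<beta>\<close> is that function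
  times \<open>-h\<close>; so \<open>\<gamma> = (1 - \<Sum>\<beta> h\<beta>) Z\<close> is constant as well. Summing gives
  \<open>Z = \<gamma> + \<Sum>\<beta> exp (f\<beta> - \<sigma>\<beta>)\<close>, and \<open>h\<close> is the gradient of \<open>ln Z\<close>.\<close>

lemma has_derivative_eq_sum_partials:
  fixes f :: "real^'m \<Rightarrow> real"
  assumes fD: "(f has_derivative D) (at x)"
    and partials: "\<And>i. has_partial_derivative f i (c i) x"
  shows "D v = (\<Sum>i\<in>UNIV. v $ i * c i)"
proof -
  have lin: "linear D" using fD by (rule has_derivative_linear)
  have D_axis: "D (axis i 1) = c i" for i
  proof -
    have "((\<lambda>t. x + t *\<^sub>R axis i 1) has_derivative (\<lambda>t. t *\<^sub>R axis i 1)) (at 0)"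
      by (auto intro!: derivative_eq_intros)
    from diff_chain_at[OF this] fD
    have "((\<lambda>t. f (x + t *\<^sub>R axis i 1)) has_derivative (\<lambda>t. D (t *\<^sub>R axis i 1))) (at 0)"
      by (simp add: o_def)
    then have "((\<lambda>t. f (x + t *\<^sub>R axis i 1)) has_real_derivative D (axis i 1)) (at 0)"
      by (simp add: has_field_derivative_def linear_scale[OF lin] mult.commute[of _ "D (axis i 1)"])
    then show ?thesis
      using partials[of i] unfolding has_partial_derivative_def by (rule DERIV_unique)
  qed
  have "D v = D (\<Sum>i\<in>UNIV. v $ i *\<^sub>R axis i 1)"
    using basis_expansion[of v] by (simp add: scalar_mult_eq_scaleR)
  also have "\<dots> = (\<Sum>i\<in>UNIV. v $ i * c i)"
    by (simp add: linear_sum[OF lin] linear_scale[OF lin] D_axis)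
  finally show ?thesis .
qed

lemma has_partial_derivative_ln_sum_exp:
  fixes x :: "real^'m" and \<sigma> :: "'m \<Rightarrow> real"
  assumes pos: "0 < \<gamma> + (\<Sum>\<beta>\<in>UNIV. exp (x $ \<beta> - \<sigma> \<beta>))"
  shows "has_partial_derivative (\<lambda>y. ln (\<gamma> + (\<Sum>\<beta>\<in>UNIV. exp (y $ \<beta> - \<sigma> \<beta>)))) \<alpha>
           (exp (x $ \<alpha> - \<sigma> \<alpha>) / (\<gamma> + (\<Sum>\<beta>\<in>UNIV. exp (x $ \<beta> - \<sigma> \<beta>)))) x"
proof -
  let ?\<delta> = "\<lambda>\<beta>. if \<beta> = \<alpha> then 1 else 0 :: real"
  have "((\<lambda>t. ln (\<gamma> + (\<Sum>\<beta>\<in>UNIV. exp (x $ \<beta> + t * ?\<delta> \<beta> - \<sigma> \<beta>)))) has_real_derivative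
          (\<Sum>\<beta>\<in>UNIV. exp (x $ \<beta> - \<sigma> \<beta>) * ?\<delta> \<beta>) / (\<gamma> + (\<Sum>\<beta>\<in>UNIV. exp (x $ \<beta> - \<sigma> \<beta>)))) (at 0)"
    using pos by (auto intro!: derivative_eq_intros)
  then show ?thesis
    unfolding has_partial_derivative_def by (simp add: axis_def if_distrib cong: if_cong)
qed

locale gibbs_weights =
  fixes U :: "(real^'m) set" and h :: "'m \<Rightarrow> real^'m \<Rightarrow> real"
  assumes open_U: "open U" and connected_U: "connected U"
    and h_pos: "\<And>\<alpha> x. x \<in> U \<Longrightarrow> h \<alpha> x > 0"
    and h_differentiable: "\<And>\<alpha>. h \<alpha> differentiable_on U"
    and h_partials: "\<And>\<alpha> \<beta> x. x \<in> U \<Longrightarrow>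
           has_partial_derivative (h \<alpha>) \<beta> ((if \<alpha> = \<beta> then 1 else 0) * h \<beta> x - h \<alpha> x * h \<beta> x) x"
begin

definition h_mean :: "real^'m \<Rightarrow> real^'m \<Rightarrow> real" where
  "h_mean x v = (\<Sum>\<beta>\<in>UNIV. v $ \<beta> * h \<beta> x)"

lemma has_derivative_h:
  assumes x: "x \<in> U"
  shows "(h \<alpha> has_derivative (\<lambda>v. h \<alpha> x * (v $ \<alpha> - h_mean x v))) (at x)"
proof -
  obtain D where D: "(h \<alpha> has_derivative D) (at x)"
    using h_differentiable[of \<alpha>] x
    unfolding differentiable_on_eq_differentiable_at[OF open_U] differentiable_def by blast
  have "D v = h \<alpha> x * (v $ \<alpha> - h_mean x v)" for v
  proof -
    have "D v = (\<Sum>\<beta>\<in>UNIV. v $ \<beta> * ((if \<alpha> = \<beta> then 1 else 0) * h \<beta> x - h \<alpha> x * h \<beta> x))"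
      using D h_partials[OF x] by (rule has_derivative_eq_sum_partials)
    also have "\<dots> = (\<Sum>\<beta>\<in>UNIV. (if \<alpha> = \<beta> then v $ \<beta> * h \<beta> x else 0) - h \<alpha> x * (v $ \<beta> * h \<beta> x))"
      by (rule sum.cong) (auto simp: algebra_simps)
    finally show ?thesis
      by (simp add: h_mean_def sum_subtractf sum_distrib_left right_diff_distrib mult.commute)
  qed
  then have "D = (\<lambda>v. h \<alpha> x * (v $ \<alpha> - h_mean x v))" by (rule ext)
  with D show ?thesis by simp
qed

lemma has_derivative_ln_h_minus_coord:
  assumes x: "x \<in> U"
  shows "((\<lambda>y. ln (h \<alpha> y) - y $ \<alpha>) has_derivative (\<lambda>v. - h_mean x v)) (at x)"
  using h_pos[OF x, of \<alpha>]
  by (auto intro!: derivative_eq_intros has_derivative_h[OF x]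
      bounded_linear.has_derivative[OF bounded_linear_vec_nth] simp: fun_eq_iff field_simps)

lemma has_derivative_one_minus_sum_h:
  assumes x: "x \<in> U"
  shows "((\<lambda>y. 1 - (\<Sum>\<beta>\<in>UNIV. h \<beta> y)) has_derivative (\<lambda>v. - (1 - (\<Sum>\<beta>\<in>UNIV. h \<beta> x)) * h_mean x v)) (at x)"
proof (rule has_derivative_eq_rhs)
  show "((\<lambda>y. 1 - (\<Sum>\<beta>\<in>UNIV. h \<beta> y)) has_derivative (\<lambda>v. - (\<Sum>\<beta>\<in>UNIV. h \<beta> x * (v $ \<beta> - h_mean x v)))) (at x)"
    by (auto intro!: derivative_eq_intros has_derivative_h[OF x])
  show "(\<lambda>v. - (\<Sum>\<beta>\<in>UNIV. h \<beta> x * (v $ \<beta> - h_mean x v))) = (\<lambda>v. - (1 - (\<Sum>\<beta>\<in>UNIV. h \<beta> x)) * h_mean x v)"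
    by (simp add: fun_eq_iff h_mean_def right_diff_distrib sum_subtractf sum_distrib_right algebra_simps)
qed

lemma log_ratio_eq:
  assumes "x \<in> U" "y \<in> U"
  shows "ln (h \<alpha> x) - x $ \<alpha> - (ln (h a x) - x $ a) = ln (h \<alpha> y) - y $ \<alpha> - (ln (h a y) - y $ a)"
proof (rule has_derivative_zero_unique_connected[OF open_U connected_U _ assms])
  fix z assume "z \<in> U"
  from has_derivative_diff[OF has_derivative_ln_h_minus_coord has_derivative_ln_h_minus_coord, OF this this]
  show "((\<lambda>x. ln (h \<alpha> x) - x $ \<alpha> - (ln (h a x) - x $ a)) has_derivative (\<lambda>v. 0)) (at z)"
    by simp
qed

lemma deficit_eq:
  assumes "x \<in> U" "y \<in> U"
  shows "(1 - (\<Sum>\<beta>\<in>UNIV. h \<beta> x)) * exp (- (ln (h a x) - x $ a)) = (1 - (\<Sum>\<beta>\<in>UNIV. h \<beta> y)) * exp (- (ln (h a y) - y $ a))"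
proof (rule has_derivative_zero_unique_connected[OF open_U connected_U _ assms])
  fix z assume z: "z \<in> U"
  have "((\<lambda>x. exp (- (ln (h a x) - x $ a))) has_derivative (\<lambda>v. exp (- (ln (h a z) - z $ a)) * h_mean z v)) (at z)"
    using has_derivative_exp[OF has_derivative_minus[OF has_derivative_ln_h_minus_coord[OF z]]]
    by (simp add: mult.commute)
  from has_derivative_mult[OF has_derivative_one_minus_sum_h[OF z] this]
  show "((\<lambda>x. (1 - (\<Sum>\<beta>\<in>UNIV. h \<beta> x)) * exp (- (ln (h a x) - x $ a))) has_derivative (\<lambda>v. 0)) (at z)"
    by (simp add: algebra_simps)
qed

lemma h_eq_softmax:
  "\<exists>\<gamma> \<sigma>. \<forall>x\<in>U. 0 < \<gamma> + (\<Sum>\<beta>\<in>UNIV. exp (x $ \<beta> - \<sigma> \<beta>)) \<and>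
     (\<forall>\<alpha>. h \<alpha> x = exp (x $ \<alpha> - \<sigma> \<alpha>) / (\<gamma> + (\<Sum>\<beta>\<in>UNIV. exp (x $ \<beta> - \<sigma> \<beta>))))"
proof (cases "U = {}")
  case False
  then obtain x\<^sub>0 where x\<^sub>0: "x\<^sub>0 \<in> U" by blast
  fix a :: 'm
  define \<sigma> where "\<sigma> \<alpha> = - (ln (h \<alpha> x\<^sub>0) - x\<^sub>0 $ \<alpha> - (ln (h a x\<^sub>0) - x\<^sub>0 $ a))" for \<alpha>
  define \<gamma> where "\<gamma> = (1 - (\<Sum>\<beta>\<in>UNIV. h \<beta> x\<^sub>0)) * exp (- (ln (h a x\<^sub>0) - x\<^sub>0 $ a))"
  show ?thesis
  proof (intro exI ballI)
    fix x assume x: "x \<in> U"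
    define Z where "Z = exp (- (ln (h a x) - x $ a))"
    have exp_eq: "exp (x $ \<alpha> - \<sigma> \<alpha>) = h \<alpha> x * Z" for \<alpha>
    proof -
      have "x $ \<alpha> - \<sigma> \<alpha> = ln (h \<alpha> x) + - (ln (h a x) - x $ a)"
        using log_ratio_eq[OF x x\<^sub>0, of \<alpha> a] by (simp add: \<sigma>_def)
      then show ?thesis using h_pos[OF x] by (simp add: Z_def exp_add)
    qed
    have "\<gamma> + (\<Sum>\<beta>\<in>UNIV. exp (x $ \<beta> - \<sigma> \<beta>)) = Z"
      using deficit_eq[OF x x\<^sub>0, of a]
      by (simp add: \<gamma>_def Z_def exp_eq sum_distrib_right[symmetric] algebra_simps)
    moreover have "Z > 0" by (simp add: Z_def)
    ultimately show "0 < \<gamma> + (\<Sum>\<beta>\<in>UNIV. exp (x $ \<beta> - \<sigma> \<beta>)) \<and>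
       (\<forall>\<alpha>. h \<alpha> x = exp (x $ \<alpha> - \<sigma> \<alpha>) / (\<gamma> + (\<Sum>\<beta>\<in>UNIV. exp (x $ \<beta> - \<sigma> \<beta>))))"
      by (simp add: exp_eq)
  qed
qed auto

end

theorem proposition5p1:
  fixes U :: "(real^'m) set"
    and h :: "'m \<Rightarrow> real^'m \<Rightarrow> real"
  assumes "open U" and "connected U"
    and "\<And>\<alpha> x. x \<in> U \<Longrightarrow> h \<alpha> x > 0"
    and "\<And>\<alpha>. h \<alpha> differentiable_on U"
    and "\<And>\<alpha> \<beta> x. x \<in> U \<Longrightarrow>
           has_partial_derivative (h \<alpha>) \<beta>
             ((if \<alpha> = \<beta> then 1 else 0) * h \<beta> x - h \<alpha> x * h \<beta> x) x"
  shows "\<exists>(\<gamma>::real) (\<sigma>::'m \<Rightarrow> real). \<forall>x\<in>U.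
           0 < \<gamma> + (\<Sum>\<alpha>\<in>UNIV. exp (x $ \<alpha> - \<sigma> \<alpha>)) \<and>
           (\<forall>\<alpha>. has_partial_derivative
                   (\<lambda>y. ln (\<gamma> + (\<Sum>\<beta>\<in>UNIV. exp (y $ \<beta> - \<sigma> \<beta>)))) \<alpha> (h \<alpha> x) x)"
proof -
  interpret gibbs_weights U h
    using assms by unfold_locales
  obtain \<gamma> \<sigma> where softmax: "\<forall>x\<in>U. 0 < \<gamma> + (\<Sum>\<beta>\<in>UNIV. exp (x $ \<beta> - \<sigma> \<beta>)) \<and>
     (\<forall>\<alpha>. h \<alpha> x = exp (x $ \<alpha> - \<sigma> \<alpha>) / (\<gamma> + (\<Sum>\<beta>\<in>UNIV. exp (x $ \<beta> - \<sigma> \<beta>))))"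
    using h_eq_softmax by blast
  show ?thesis
  proof (intro exI ballI conjI allI)
    fix x \<alpha> assume "x \<in> U"
    with softmax show "0 < \<gamma> + (\<Sum>\<beta>\<in>UNIV. exp (x $ \<beta> - \<sigma> \<beta>))"
      and "has_partial_derivative (\<lambda>y. ln (\<gamma> + (\<Sum>\<beta>\<in>UNIV. exp (y $ \<beta> - \<sigma> \<beta>)))) \<alpha> (h \<alpha> x) x"
      by (auto intro: has_partial_derivative_ln_sum_exp)
  qed
qed

end
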